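(* For $p\le \log r$, every deterministic online algorithm for the Online Mixed Packing and Covering problem with objective the $\ell_p$ norm of the violation vector $\vec\lambda=(\lambda_1,\dots,\lambda_r)$ has competitive ratio $\Omega(p\log(d/\log r))$. This holds even when all entries of the covering and packing matrices are in $\{0,1\}$.
   Context: Online Mixed Packing and Covering: there are $m$ non-negative variables $\vec x$, initially $0$, which may only increase over time. A set of $r$ packing constraints $P\vec x\le \vec p$ (with $P\in\mathbb{R}_{\ge0}^{r\times m}$, $\vec p>0$) is known offline; covering constraints $\sum_i C_{ji}x_i\ge c_j$ with non-negative entries arrive online one at a time and must be satisfied upon arrival by increasing variables. For each packing constraint $k$, the violation is $\lambda_k=\frac{\sum_i P_{ki}x_i}{p_k}$, and the objective is $\big(\sum_{k=1}^r\lambda_k^p\big)^{1/p}$, compared with the optimum offline value. $d$ is the maximum number of variables appearing in any packing or covering constraint. *)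

theory Defs
  imports Complex_Main
begin

text \<open>Variables are indexed by i < m; packing constraints by k < r
  (matrix Pm :: nat => nat => real, right-hand sides pv :: nat => real).
  A covering constraint is a pair (C, c) of a row C :: nat => real and a
  right-hand side c, meaning  sum_{i<m} C i * x i >= c.\<close>

type_synonym cover = "(nat \<Rightarrow> real) \<times> real"

text \<open>A deterministic online algorithm: given the offline data (m, Pm, pv) and the
  list of covering constraints revealed so far, it outputs the current
  assignment of the variables.  Being a function of the revealed prefix only,
  it is automatically deterministic and online.\<close>

type_synonym online_algorithm =
  "nat \<Rightarrow> (nat \<Rightarrow> nat \<Rightarrow> real) \<Rightarrow> (nat \<Rightarrow> real) \<Rightarrow> cover list \<Rightarrow> (nat \<Rightarrow> real)"

definition support_size :: "nat \<Rightarrow> (nat \<Rightarrow> real) \<Rightarrow> nat" where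
  "support_size m row = card {i. i < m \<and> row i \<noteq> 0}"

definition zero_one_row :: "nat \<Rightarrow> (nat \<Rightarrow> real) \<Rightarrow> bool" where
  "zero_one_row m row \<longleftrightarrow> (\<forall>i<m. row i = 0 \<or> row i = 1)"

text \<open>Covering
  constraints have positive right-hand side and at least one variable
  (so that they can be satisfied).\<close>

definition wf_instance ::
  "nat \<Rightarrow> nat \<Rightarrow> nat \<Rightarrow> (nat \<Rightarrow> nat \<Rightarrow> real) \<Rightarrow> (nat \<Rightarrow> real) \<Rightarrow> cover list \<Rightarrow> bool" where
  "wf_instance r d m Pm pv cs \<longleftrightarrow>
     (\<forall>k<r. zero_one_row m (Pm k) \<and> 0 < pv k \<and> support_size m (Pm k) \<le> d) \<and>
     (\<forall>(C, c) \<in> set cs. zero_one_row m C \<and> 0 < c \<and>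
         1 \<le> support_size m C \<and> support_size m C \<le> d)"

definition max_sparsity_eq ::
  "nat \<Rightarrow> nat \<Rightarrow> nat \<Rightarrow> (nat \<Rightarrow> nat \<Rightarrow> real) \<Rightarrow> cover list \<Rightarrow> bool" where
  "max_sparsity_eq r d m Pm cs \<longleftrightarrow>
     (\<exists>k<r. support_size m (Pm k) = d) \<or> (\<exists>(C, c) \<in> set cs. support_size m C = d)"

definition violation :: "nat \<Rightarrow> (nat \<Rightarrow> nat \<Rightarrow> real) \<Rightarrow> (nat \<Rightarrow> real) \<Rightarrow> (nat \<Rightarrow> real) \<Rightarrow> nat \<Rightarrow> real" where
  "violation m Pm pv x k = (\<Sum>i<m. Pm k i * x i) / pv k"

definition lp_objective ::
  "nat \<Rightarrow> real \<Rightarrow> nat \<Rightarrow> (nat \<Rightarrow> nat \<Rightarrow> real) \<Rightarrow> (nat \<Rightarrow> real) \<Rightarrow> (nat \<Rightarrow> real) \<Rightarrow> real" where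
  "lp_objective r p m Pm pv x = (\<Sum>k<r. violation m Pm pv x k powr p) powr (1 / p)"

definition feasible :: "nat \<Rightarrow> cover list \<Rightarrow> (nat \<Rightarrow> real) \<Rightarrow> bool" where
  "feasible m cs x \<longleftrightarrow> (\<forall>i<m. 0 \<le> x i) \<and> (\<forall>(C, c) \<in> set cs. c \<le> (\<Sum>i<m. C i * x i))"

definition opt_value ::
  "nat \<Rightarrow> real \<Rightarrow> nat \<Rightarrow> (nat \<Rightarrow> nat \<Rightarrow> real) \<Rightarrow> (nat \<Rightarrow> real) \<Rightarrow> cover list \<Rightarrow> real" where
  "opt_value r p m Pm pv cs = Inf (lp_objective r p m Pm pv ` {x. feasible m cs x})"

definition valid_online_alg :: "nat \<Rightarrow> nat \<Rightarrow> online_algorithm \<Rightarrow> bool" where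
  "valid_online_alg r d alg \<longleftrightarrow>
     (\<forall>m Pm pv cs. wf_instance r d m Pm pv cs \<longrightarrow>
        (\<forall>i<m. alg m Pm pv [] i = 0) \<and>
        feasible m cs (alg m Pm pv cs) \<and>
        (\<forall>cs' c. cs = cs' @ [c] \<longrightarrow> (\<forall>i<m. alg m Pm pv cs' i \<le> alg m Pm pv cs i)))"

definition competitive :: "nat \<Rightarrow> nat \<Rightarrow> real \<Rightarrow> online_algorithm \<Rightarrow> real \<Rightarrow> bool" where
  "competitive r d p alg \<rho> \<longleftrightarrow>
     (\<forall>m Pm pv cs. wf_instance r d m Pm pv cs \<and> max_sparsity_eq r d m Pm cs \<longrightarrow>
        lp_objective r p m Pm pv (alg m Pm pv cs) \<le> \<rho> * opt_value r p m Pm pv cs)"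

end

theory Submission
  imports Defs
begin

text \<open>The hard instance is a complete binary tree of depth q \<approx> p whose 2^q leaves are
  the packing constraints; every node below the root owns a block of 2^a \<approx> d / q
  variables, and a leaf's constraint contains the blocks of all its ancestors. The adversary
  walks down from the root. At a node it plays a halving game on the blocks of the two
  children: it demands one unit on a window of slots common to both blocks and then keeps the
  half of the window on which the algorithm put less, so after a rounds the algorithm has
  spent a/2 on the two children, whereas one unit on the last window slot of either child
  satisfies all these demands. The adversary descends into a child that received a/4 and the
  offline solution pays on the sibling. At the final leaf the algorithm's violation is
  q a / 4, while the offline solution violates every leaf by at most one, so its l_p
  objective is at most (2^q)^(1/p) \<le> 2. Hence the ratio is at least q a / 8, which is
  \<Omega>(p log (d / log r)).\<close>

lemma support_size_of_bool_mem:
  assumes "S \<subseteq> {..<m}"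
  shows "support_size m (\<lambda>i. of_bool (i \<in> S)) = card S"
proof -
  have "{i. i < m \<and> of_bool (i \<in> S) \<noteq> (0::real)} = S" using assms by auto
  then show ?thesis by (simp add: support_size_def)
qed

lemma zero_one_row_of_bool: "zero_one_row m (\<lambda>i. of_bool (P i))"
  by (simp add: zero_one_row_def)

lemma sum_fun_upd_add:
  fixes x :: "'a \<Rightarrow> real"
  assumes "finite S"
  shows "(\<Sum>i\<in>S. (x(i0 := x i0 + e)) i) = (\<Sum>i\<in>S. x i) + of_bool (i0 \<in> S) * e"
proof -
  have "(\<Sum>i\<in>S. (x(i0 := x i0 + e)) i) = (\<Sum>i\<in>S. x i + (if i = i0 then e else 0))"
    by (rule sum.cong) auto
  also have "\<dots> = (\<Sum>i\<in>S. x i) + of_bool (i0 \<in> S) * e"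
    using assms by (simp add: sum.distrib sum.delta')
  finally show ?thesis .
qed

lemma covering_value_mono:
  assumes "zero_one_row m C" "\<And>i. i < m \<Longrightarrow> x i \<le> y i"
  shows "(\<Sum>i<m. C i * x i) \<le> (\<Sum>i<m. C i * y i)"
proof (rule sum_mono)
  fix i assume "i \<in> {..<m}"
  then have "C i = 0 \<or> C i = 1" "x i \<le> y i" using assms unfolding zero_one_row_def by auto
  then show "C i * x i \<le> C i * y i" by auto
qed

lemma feasible_append_fun_upd:
  assumes feas: "feasible m cs x" and i0: "i0 < m"
    and rows: "\<forall>(C, c)\<in>set (cs @ ext). zero_one_row m C"
    and ext: "\<forall>(C, c)\<in>set ext. C i0 = 1 \<and> c \<le> 1"
  shows "feasible m (cs @ ext) (x(i0 := x i0 + 1))"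
  unfolding feasible_def
proof (intro conjI allI impI ballI)
  let ?x' = "x(i0 := x i0 + 1)"
  have x_le: "x i \<le> ?x' i" for i by simp
  have nonneg: "0 \<le> ?x' i" if "i < m" for i
    using feas that unfolding feasible_def by simp
  then show "0 \<le> ?x' i" if "i < m" for i using that .
  fix Cc assume Cc: "Cc \<in> set (cs @ ext)"
  obtain C c where Cc_eq: "Cc = (C, c)" by fastforce
  have C01: "zero_one_row m C" using rows Cc Cc_eq by auto
  show "case Cc of (C, c) \<Rightarrow> c \<le> (\<Sum>i<m. C i * ?x' i)"
  proof (cases "Cc \<in> set cs")
    case True
    then have "c \<le> (\<Sum>i<m. C i * x i)" using feas Cc_eq unfolding feasible_def by auto
    also have "\<dots> \<le> (\<Sum>i<m. C i * ?x' i)" by (rule covering_value_mono[OF C01 x_le])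
    finally show ?thesis using Cc_eq by simp
  next
    case False
    then have "C i0 = 1" "c \<le> 1" using Cc Cc_eq ext by auto
    moreover have "C i0 * ?x' i0 \<le> (\<Sum>i<m. C i * ?x' i)"
    proof (rule member_le_sum)
      show "0 \<le> C i * ?x' i" if "i \<in> {..<m} - {i0}" for i
        using C01 nonneg that unfolding zero_one_row_def by force
    qed (use i0 in auto)
    moreover have "1 \<le> ?x' i0" using feas i0 unfolding feasible_def by simp
    ultimately show ?thesis using Cc_eq by simp
  qed
qed

lemma violation_le_lp_objective:
  assumes "0 < p" "k < r" "0 \<le> violation m Pm pv x k"
  shows "violation m Pm pv x k \<le> lp_objective r p m Pm pv x"
proof -
  have "violation m Pm pv x k = (violation m Pm pv x k powr p) powr (1 / p)"
    using assms by (simp add: powr_powr)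
  also have "\<dots> \<le> lp_objective r p m Pm pv x"
    unfolding lp_objective_def using assms by (intro powr_mono2 member_le_sum) auto
  finally show ?thesis .
qed

lemma lp_objective_le_powr:
  assumes "0 < p"
    and unit: "\<And>k. k < r \<Longrightarrow> 0 \<le> violation m Pm pv x k \<and> violation m Pm pv x k \<le> 1"
    and zero: "\<And>k. k < r \<Longrightarrow> n \<le> k \<Longrightarrow> violation m Pm pv x k = 0"
  shows "lp_objective r p m Pm pv x \<le> real n powr (1 / p)"
proof -
  have "(\<Sum>k<r. violation m Pm pv x k powr p) \<le> (\<Sum>k<r. of_bool (k < n))"
    by (rule sum_mono) (use assms in \<open>auto simp: powr_le1\<close>)
  also have "\<dots> = real (card ({..<r} \<inter> {..<n}))"
    by (simp add: sum_of_bool_mult_eq[where f = "\<lambda>_. 1", simplified] lessThan_def)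
  also have "\<dots> \<le> real n" using card_mono[of "{..<n}" "{..<r} \<inter> {..<n}"] by simp
  finally show ?thesis
    unfolding lp_objective_def using assms(1) by (intro powr_mono2) (auto intro: sum_nonneg)
qed

lemma opt_value_le_lp_objective:
  assumes "feasible m cs x"
  shows "opt_value r p m Pm pv cs \<le> lp_objective r p m Pm pv x"
  unfolding opt_value_def
proof (rule cInf_lower)
  show "bdd_below (lp_objective r p m Pm pv ` {x. feasible m cs x})"
    by (rule bdd_belowI[of _ 0]) (auto simp: lp_objective_def)
qed (use assms in simp)

lemma opt_value_nonneg:
  assumes "feasible m cs x"
  shows "0 \<le> opt_value r p m Pm pv cs"
  unfolding opt_value_def
  by (rule cInf_greatest) (use assms in \<open>auto simp: lp_objective_def\<close>)

lemma competitive_ratio_ge: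
  assumes "competitive r d p alg \<rho>"
    and "wf_instance r d m Pm pv cs" "max_sparsity_eq r d m Pm cs"
    and feas: "feasible m cs x" and "0 < A"
    and alg: "A \<le> lp_objective r p m Pm pv (alg m Pm pv cs)"
    and off: "lp_objective r p m Pm pv x \<le> B"
  shows "A \<le> \<rho> * B"
proof -
  define opt where "opt = opt_value r p m Pm pv cs"
  have A: "A \<le> \<rho> * opt" using assms(1-3) alg unfolding competitive_def opt_def by fastforce
  have "0 \<le> opt" unfolding opt_def by (rule opt_value_nonneg[OF feas])
  have "opt \<le> B" unfolding opt_def using opt_value_le_lp_objective[OF feas] off by (rule order_trans)
  moreover have "0 < \<rho>"
  proof (rule ccontr)
    assume "\<not> 0 < \<rho>"
    then have "\<rho> * opt \<le> 0" using \<open>0 \<le> opt\<close> by (simp add: mult_nonpos_nonneg)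
    then show False using A \<open>0 < A\<close> by linarith
  qed
  ultimately have "\<rho> * opt \<le> \<rho> * B" by simp
  then show ?thesis using A by linarith
qed

lemma exists_light_half:
  fixes f :: "nat \<Rightarrow> real"
  assumes "1 \<le> (\<Sum>s\<in>{lo..<lo + 2 * h}. f s)"
  obtains lo' where "lo' = lo \<or> lo' = lo + h" "1 / 2 \<le> (\<Sum>s\<in>{lo..<lo + 2 * h} - {lo'..<lo' + h}. f s)"
proof -
  have split: "(\<Sum>s\<in>{lo..<lo + 2 * h}. f s) = (\<Sum>s\<in>{lo..<lo + h}. f s) + (\<Sum>s\<in>{lo + h..<lo + 2 * h}. f s)"
    by (rule sum.atLeastLessThan_concat[symmetric]) auto
  have "{lo..<lo + 2 * h} - {lo..<lo + h} = {lo + h..<lo + 2 * h}"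
    "{lo..<lo + 2 * h} - {lo + h..<lo + h + h} = {lo..<lo + h}" by auto
  then show ?thesis using that[of lo] that[of "lo + h"] assms split by fastforce
qed

lemma ln_le_twice_exponent:
  fixes X :: real
  assumes "16 \<le> X" "X < 4 * 2 ^ a"
  shows "ln X \<le> 2 * real a"
proof -
  have "(2::real) ^ 2 < 2 ^ a" using assms by simp
  then have "2 < a" by (metis one_less_numeral_iff power_strict_increasing_iff semiring_norm(76))
  have "ln X \<le> log 2 X"
    using assms ln_2_less_1 by (simp add: log_def divide_simps mult_le_cancel_left1)
  also have "log 2 X < log 2 (2 powr (a + 2))"
    using assms by (simp add: powr_add powr_realpow)
  also have "\<dots> = a + 2" by simp
  finally show ?thesis using \<open>2 < a\<close> by linarith
qed

lemma hard_instance_parameters: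
  fixes r d :: nat and p :: real
  assumes r: "16 \<le> real r" and d: "16 * log 2 r \<le> d" and p: "1 \<le> p" "p \<le> log 2 r"
  obtains q a :: nat where "1 \<le> q" "2 ^ q \<le> r" "real q \<le> p" "1 \<le> a" "2 * q * 2 ^ a \<le> d"
    "p * ln (d / log 2 r) \<le> 4 * real q * real a"
proof -
  define q where "q = nat \<lfloor>p\<rfloor>"
  have "real q = \<lfloor>p\<rfloor>" "1 \<le> \<lfloor>p\<rfloor>" using p by (simp_all add: q_def)
  then have q: "real q \<le> p" "p < q + 1" "1 \<le> q" by linarith+
  have "real (2 ^ q) \<le> 2 powr log 2 r"
    using q p by (auto simp: powr_realpow[symmetric] intro: powr_mono)
  then have qr: "2 ^ q \<le> r" using r by simp
  define n where "n = d div (2 * q)"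
  have "16 * q \<le> d" using d q p by linarith
  then have "8 \<le> n" unfolding n_def using q by (simp add: less_eq_div_iff_mult_less_eq)
  obtain a where a: "2 ^ a \<le> n" "n < 2 ^ (a + 1)" using ex_power_ivl1[of 2 n] \<open>8 \<le> n\<close> by auto
  have "1 \<le> a" using a \<open>8 \<le> n\<close> by (cases a) auto
  have "2 * q * 2 ^ a \<le> 2 * q * n" using a by simp
  also have "\<dots> \<le> d" unfolding n_def by (metis div_times_less_eq_dividend mult.commute)
  finally have qa: "2 * q * 2 ^ a \<le> d" .
  have "d < 2 * q + n * (2 * q)" unfolding n_def using q by (intro dividend_less_div_times) simp
  also have "\<dots> = 2 * q * (n + 1)" by (simp add: algebra_simps)
  also have "\<dots> \<le> 2 * q * 2 ^ (a + 1)" using a by (intro mult_left_mono) auto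
  finally have "d < 4 * q * 2 ^ a" by simp
  then have "real d < 4 * q * 2 ^ a" by (metis of_nat_less_iff of_nat_mult of_nat_numeral of_nat_power)
  define X where "X = d / log 2 r"
  have L: "0 < log 2 r" "q \<le> log 2 r" using q p by linarith+
  have "16 \<le> X" unfolding X_def using d L(1) by (simp add: le_divide_eq)
  moreover have "X < 4 * 2 ^ a"
  proof -
    have "4 * q * 2 ^ a \<le> 4 * log 2 r * (2::real) ^ a" using L(2) by simp
    then have "real d < 4 * 2 ^ a * log 2 r" using \<open>real d < 4 * q * 2 ^ a\<close> by argo
    then show ?thesis unfolding X_def using L(1) by (simp add: divide_less_eq)
  qed
  ultimately have "ln X \<le> 2 * real a" by (rule ln_le_twice_exponent)
  moreover have "p \<le> 2 * real q" using q by linarith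
  ultimately have "p * ln X \<le> (2 * real q) * (2 * real a)"
    using p \<open>16 \<le> X\<close> by (intro mult_mono) auto
  then show ?thesis using that q qr \<open>1 \<le> a\<close> qa by (simp add: X_def)
qed

locale hard_instance =
  fixes alg :: online_algorithm and r d q a :: nat
  assumes valid: "valid_online_alg r d alg"
    and depth_pos: "1 \<le> q" and leaves_le: "2 ^ q \<le> r"
    and slots_pos: "1 \<le> a" and slots_le: "2 * q * 2 ^ a \<le> d"
begin

text \<open>The variables below tree_size form a complete binary tree of depth q whose nodes
  carry blocks of 2^a slots: var j c s is slot s of node c at depth j, the children of c
  being 2c and 2c+1, and ancestor j c i is the depth-i ancestor of c. The remaining d variables form a padding block, covered once so that the maximal
  sparsity is exactly d.\<close>

definition var :: "nat \<Rightarrow> nat \<Rightarrow> nat \<Rightarrow> nat" where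
  "var j c s = (j * 2 ^ q + c) * 2 ^ a + s"

definition ancestor :: "nat \<Rightarrow> nat \<Rightarrow> nat \<Rightarrow> nat" where
  "ancestor j c i = c div 2 ^ (j - i)"

definition tree_size :: nat where
  "tree_size = (q + 1) * 2 ^ q * 2 ^ a"

definition num_vars :: nat where
  "num_vars = tree_size + d"

definition leaf_vars :: "nat \<Rightarrow> nat set" where
  "leaf_vars k = (if k < 2 ^ q
     then (\<lambda>(i, s). var i (ancestor q k i) s) ` ({1..q} \<times> {..<2 ^ a}) else {})"

definition packing :: "nat \<Rightarrow> nat \<Rightarrow> real" where
  "packing k i = of_bool (i \<in> leaf_vars k)"

definition response :: "cover list \<Rightarrow> nat \<Rightarrow> real" where
  "response cs = alg num_vars packing (\<lambda>_. 1) cs"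

definition admissible :: "cover \<Rightarrow> bool" where
  "admissible C \<longleftrightarrow> zero_one_row num_vars (fst C) \<and> 0 < snd C \<and>
     1 \<le> support_size num_vars (fst C) \<and> support_size num_vars (fst C) \<le> d"

definition padding :: cover where
  "padding = ((\<lambda>i. of_bool (i \<in> {tree_size..<num_vars})), 1)"

definition block_mass :: "(nat \<Rightarrow> real) \<Rightarrow> nat \<Rightarrow> nat \<Rightarrow> real" where
  "block_mass x j c = (\<Sum>s<2 ^ a. x (var j c s))"

lemma var_eq_iff:
  assumes "c < 2 ^ q" "s < 2 ^ a" "c' < 2 ^ q" "s' < 2 ^ a"
  shows "var j c s = var j' c' s' \<longleftrightarrow> j = j' \<and> c = c' \<and> s = s'"
proof
  assume eq: "var j c s = var j' c' s'"
  have "var j c s mod 2 ^ a = s" "var j' c' s' mod 2 ^ a = s'"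
    "var j c s div 2 ^ a = j * 2 ^ q + c" "var j' c' s' div 2 ^ a = j' * 2 ^ q + c'"
    using assms by (simp_all add: var_def)
  then have "s = s'" and node: "j * 2 ^ q + c = j' * 2 ^ q + c'" using eq by metis+
  moreover have "(j * 2 ^ q + c) div 2 ^ q = j" "(j' * 2 ^ q + c') div 2 ^ q = j'"
    using assms by simp_all
  ultimately show "j = j' \<and> c = c' \<and> s = s'" by (metis add_left_cancel)
qed simp

lemma var_less_tree_size:
  assumes "j \<le> q" "c < 2 ^ q" "s < 2 ^ a"
  shows "var j c s < tree_size"
proof -
  have "var j c s < (j * 2 ^ q + c + 1) * 2 ^ a" using assms by (simp add: var_def)
  also have "\<dots> \<le> (q * 2 ^ q + 2 ^ q) * 2 ^ a"
  proof (rule mult_right_mono)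
    have "j * 2 ^ q \<le> q * 2 ^ q" using assms(1) by simp
    then show "j * 2 ^ q + c + 1 \<le> q * 2 ^ q + 2 ^ q" using assms(2) by linarith
  qed simp
  finally show ?thesis by (simp add: tree_size_def algebra_simps)
qed

lemma var_less_num_vars:
  assumes "j \<le> q" "c < 2 ^ q" "s < 2 ^ a"
  shows "var j c s < num_vars"
  using var_less_tree_size[OF assms] by (simp add: num_vars_def)

lemma ancestor_le: "ancestor j c i \<le> c"
  by (simp add: ancestor_def)

lemma ancestor_self: "ancestor j c j = c"
  by (simp add: ancestor_def)

lemma ancestor_ancestor:
  assumes "i \<le> j" "j \<le> l"
  shows "ancestor j (ancestor l c j) i = ancestor l c i"
proof -
  have "l - i = (l - j) + (j - i)" using assms by simp
  then show ?thesis by (simp add: ancestor_def div_mult2_eq power_add)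
qed

lemma ancestor_child: "b < 2 \<Longrightarrow> ancestor (Suc j) (2 * c + b) j = c"
  by (simp add: ancestor_def)

lemma child_less:
  fixes c b :: nat
  assumes "j < q" "c < 2 ^ j" "b < 2"
  shows "2 * c + b < 2 ^ Suc j" "2 * c + b < 2 ^ q"
proof -
  show "2 * c + b < 2 ^ Suc j" using assms by simp
  also have "(2::nat) ^ Suc j \<le> 2 ^ q" using assms by (intro power_increasing) auto
  finally show "2 * c + b < 2 ^ q" .
qed

lemma child_var_less_num_vars:
  assumes "j < q" "c < 2 ^ j" "b < 2" "s < 2 ^ a"
  shows "var (Suc j) (2 * c + b) s < num_vars"
  using assms child_less(2)[OF assms(1-3)] by (simp add: var_less_num_vars)

lemma leaf_vars_subset: "leaf_vars k \<subseteq> {..<tree_size}"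
  using le_less_trans[OF ancestor_le]
  by (auto simp: leaf_vars_def intro!: var_less_tree_size)

lemma inj_on_leaf_var:
  assumes "k < 2 ^ q"
  shows "inj_on (\<lambda>(i, s). var i (ancestor q k i) s) ({1..q} \<times> {..<2 ^ a})"
  using assms le_less_trans[OF ancestor_le]
  by (auto simp: inj_on_def var_eq_iff)

lemma card_leaf_vars: "card (leaf_vars k) \<le> q * 2 ^ a"
  using card_image_le[of "{1..q} \<times> {..<2 ^ a}" "\<lambda>(i, s). var i (ancestor q k i) s"]
  by (simp add: leaf_vars_def card_cartesian_product)

lemma var_mem_leaf_vars_iff:
  assumes "k < 2 ^ q" "1 \<le> j" "j \<le> q" "c < 2 ^ q" "s < 2 ^ a"
  shows "var j c s \<in> leaf_vars k \<longleftrightarrow> ancestor q k j = c"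
  using assms le_less_trans[OF ancestor_le assms(1)]
  by (auto simp: leaf_vars_def var_eq_iff)

lemma sum_leaf_vars:
  assumes "k < 2 ^ q"
  shows "(\<Sum>i\<in>leaf_vars k. x i) = (\<Sum>j=1..q. block_mass x j (ancestor q k j))"
proof -
  have "(\<Sum>i\<in>leaf_vars k. x i) = (\<Sum>(j, s)\<in>{1..q} \<times> {..<2 ^ a}. x (var j (ancestor q k j) s))"
    using assms unfolding leaf_vars_def
    by (simp only: if_True sum.reindex[OF inj_on_leaf_var[OF assms]]) (simp add: case_prod_beta')
  then show ?thesis by (simp add: sum.cartesian_product block_mass_def)
qed

lemma mem_leaf_vars_less_num_vars: "i \<in> leaf_vars k \<Longrightarrow> i < num_vars"
  using leaf_vars_subset by (force simp: num_vars_def)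

lemma violation_packing:
  "violation num_vars packing (\<lambda>_. 1) x k = (\<Sum>i\<in>leaf_vars k. x i)"
proof -
  have "leaf_vars k \<subseteq> {..<num_vars}" using mem_leaf_vars_less_num_vars by blast
  then show ?thesis by (simp add: violation_def packing_def Int_absorb1)
qed

lemma wf_instance_iff:
  "wf_instance r d num_vars packing (\<lambda>_. 1) cs \<longleftrightarrow> (\<forall>C\<in>set cs. admissible C)"
proof -
  have "support_size num_vars (packing k) \<le> d" for k
  proof -
    have "leaf_vars k \<subseteq> {..<num_vars}" using mem_leaf_vars_less_num_vars by blast
    then have "support_size num_vars (packing k) = card (leaf_vars k)"
      unfolding packing_def by (rule support_size_of_bool_mem)
    also have "\<dots> \<le> 2 * q * 2 ^ a" using card_leaf_vars[of k] by simp
    finally show ?thesis using slots_le by linarith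
  qed
  then show ?thesis
    by (auto simp: wf_instance_def admissible_def packing_def zero_one_row_def case_prod_beta')
qed

lemma response_feasible:
  "\<forall>C\<in>set cs. admissible C \<Longrightarrow> feasible num_vars cs (response cs)"
  using valid by (simp add: valid_online_alg_def response_def wf_instance_iff)

lemma response_mono:
  assumes "\<forall>C\<in>set (cs @ ext). admissible C" "i < num_vars"
  shows "response cs i \<le> response (cs @ ext) i"
  using assms(1)
proof (induction ext rule: rev_induct)
  case (snoc C ext)
  then have "response cs i \<le> response (cs @ ext) i" by simp
  also have "\<dots> \<le> response (cs @ ext @ [C]) i"
    using valid snoc.prems assms(2) unfolding valid_online_alg_def response_def
    by (metis append_assoc wf_instance_iff)
  finally show ?case by simp
qed simp

lemma block_mass_mono:
  assumes "\<forall>C\<in>set (cs @ ext). admissible C" "j \<le> q" "c < 2 ^ q"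
  shows "block_mass (response cs) j c \<le> block_mass (response (cs @ ext)) j c"
  unfolding block_mass_def
  using assms by (intro sum_mono response_mono) (auto intro: var_less_num_vars)

lemma support_size_padding: "support_size num_vars (fst padding) = d"
  unfolding padding_def fst_conv by (subst support_size_of_bool_mem) (auto simp: num_vars_def)

lemma admissible_padding: "admissible padding"
proof -
  have "1 \<le> 2 * q * 2 ^ a" using depth_pos by simp
  then have "1 \<le> d" using slots_le by linarith
  then show ?thesis using support_size_padding
    unfolding admissible_def padding_def fst_conv snd_conv by (simp add: zero_one_row_of_bool)
qed

definition window_vars :: "nat \<Rightarrow> nat \<Rightarrow> nat \<Rightarrow> nat \<Rightarrow> nat set" where
  "window_vars j c lo len = (\<lambda>(b, s). var (Suc j) (2 * c + b) s) ` ({..<2} \<times> {lo..<lo + len})"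

definition window_cover :: "nat \<Rightarrow> nat \<Rightarrow> nat \<Rightarrow> nat \<Rightarrow> cover" where
  "window_cover j c lo len = ((\<lambda>i. of_bool (i \<in> window_vars j c lo len)), 1)"

definition children_mass :: "(nat \<Rightarrow> real) \<Rightarrow> nat \<Rightarrow> nat \<Rightarrow> nat \<Rightarrow> real" where
  "children_mass x j c s = x (var (Suc j) (2 * c) s) + x (var (Suc j) (2 * c + 1) s)"

lemma window_vars_subset:
  assumes "j < q" "c < 2 ^ j" "lo + len \<le> 2 ^ a"
  shows "window_vars j c lo len \<subseteq> {..<tree_size}"
  using assms child_less(2)[OF assms(1,2)] by (auto simp: window_vars_def intro!: var_less_tree_size)

lemma inj_on_window_var:
  assumes "j < q" "c < 2 ^ j" "lo + len \<le> 2 ^ a"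
  shows "inj_on (\<lambda>(b, s). var (Suc j) (2 * c + b) s) ({..<2} \<times> {lo..<lo + len})"
  using assms child_less(2)[OF assms(1,2)] by (auto simp: inj_on_def var_eq_iff)

lemma admissible_window_cover:
  assumes "j < q" "c < 2 ^ j" "lo + len \<le> 2 ^ a" "1 \<le> len"
  shows "admissible (window_cover j c lo len)"
proof -
  have "window_vars j c lo len \<subseteq> {..<num_vars}"
    using window_vars_subset[OF assms(1-3)] by (force simp: num_vars_def)
  moreover have "card (window_vars j c lo len) = 2 * len"
    unfolding window_vars_def by (simp add: card_image[OF inj_on_window_var[OF assms(1-3)]] card_cartesian_product)
  moreover have "2 * len \<le> d"
  proof -
    have "2 ^ a \<le> q * 2 ^ a" using depth_pos by simp
    then show ?thesis using assms(3) slots_le by linarith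
  qed
  ultimately show ?thesis using assms(4)
    unfolding admissible_def window_cover_def fst_conv snd_conv
    by (simp add: zero_one_row_of_bool support_size_of_bool_mem)
qed

lemma window_cover_value:
  assumes "j < q" "c < 2 ^ j" "lo + len \<le> 2 ^ a"
  shows "(\<Sum>i<num_vars. fst (window_cover j c lo len) i * x i) = (\<Sum>s\<in>{lo..<lo + len}. children_mass x j c s)"
proof -
  have "window_vars j c lo len \<subseteq> {..<num_vars}"
    using window_vars_subset[OF assms] by (force simp: num_vars_def)
  then have "(\<Sum>i<num_vars. fst (window_cover j c lo len) i * x i) = (\<Sum>i\<in>window_vars j c lo len. x i)"
    by (simp add: window_cover_def Int_absorb1)
  also have "\<dots> = (\<Sum>(b, s)\<in>{..<2} \<times> {lo..<lo + len}. x (var (Suc j) (2 * c + b) s))"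
    unfolding window_vars_def by (simp only: sum.reindex[OF inj_on_window_var[OF assms]]) (simp add: case_prod_beta')
  also have "\<dots> = (\<Sum>b<2. \<Sum>s\<in>{lo..<lo + len}. x (var (Suc j) (2 * c + b) s))"
    by (simp add: sum.cartesian_product)
  also have "\<dots> = (\<Sum>s\<in>{lo..<lo + len}. children_mass x j c s)"
    by (simp add: children_mass_def sum.distrib numeral_2_eq_2)
  finally show ?thesis .
qed

lemma window_cover_at:
  "b < 2 \<Longrightarrow> s \<in> {lo..<lo + len} \<Longrightarrow> fst (window_cover j c lo len) (var (Suc j) (2 * c + b) s) = 1"
proof -
  assume "b < 2" "s \<in> {lo..<lo + len}"
  then have "var (Suc j) (2 * c + b) s \<in> window_vars j c lo len"
    unfolding window_vars_def by (intro image_eqI[of _ _ "(b, s)"]) auto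
  then show ?thesis by (simp add: window_cover_def)
qed

text \<open>A stage of the halving game at node c of depth j: each demand issued so far (the list
  ext) asks for one unit on the current window of slots in both children of c, and the
  algorithm has already placed mass \<mu> on the children outside the window.\<close>

definition window_state ::
  "nat \<Rightarrow> nat \<Rightarrow> cover list \<Rightarrow> cover list \<Rightarrow> nat \<Rightarrow> nat \<Rightarrow> real \<Rightarrow> bool" where
  "window_state j c cs ext lo len \<mu> \<longleftrightarrow>
     (\<forall>C\<in>set (cs @ ext). admissible C) \<and> lo + len \<le> 2 ^ a \<and>
     (\<forall>C\<in>set ext. snd C = 1 \<and> (\<forall>b<2. \<forall>s\<in>{lo..<lo + len}. fst C (var (Suc j) (2 * c + b) s) = 1)) \<and>
     \<mu> \<le> (\<Sum>s\<in>{..<2 ^ a} - {lo..<lo + len}. children_mass (response (cs @ ext)) j c s)"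

lemma children_mass_mono:
  assumes "\<forall>C\<in>set (cs @ ext). admissible C" "j < q" "c < 2 ^ j" "s < 2 ^ a"
  shows "children_mass (response cs) j c s \<le> children_mass (response (cs @ ext)) j c s"
  using child_var_less_num_vars[OF assms(2,3) _ assms(4), of 0] child_var_less_num_vars[OF assms(2,3) _ assms(4), of 1]
  unfolding children_mass_def by (intro add_mono response_mono[OF assms(1)]) auto

lemma children_mass_nonneg:
  assumes "\<forall>C\<in>set cs. admissible C" "j < q" "c < 2 ^ j" "s < 2 ^ a"
  shows "0 \<le> children_mass (response cs) j c s"
  using child_var_less_num_vars[OF assms(2,3) _ assms(4), of 0] child_var_less_num_vars[OF assms(2,3) _ assms(4), of 1]
    response_feasible[OF assms(1)]
  unfolding children_mass_def feasible_def by (intro add_nonneg_nonneg) auto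

lemma window_state_halve:
  assumes j: "j < q" "c < 2 ^ j" and "0 < h" and st: "window_state j c cs ext lo (2 * h) \<mu>"
  shows "\<exists>ext' lo'. window_state j c cs ext' lo' h (\<mu> + 1 / 2)"
proof -
  from st have adm: "\<forall>C\<in>set (cs @ ext). admissible C" and fit: "lo + 2 * h \<le> 2 ^ a"
    and covers: "\<forall>C\<in>set ext. snd C = 1 \<and> (\<forall>b<2. \<forall>s\<in>{lo..<lo + 2 * h}. fst C (var (Suc j) (2 * c + b) s) = 1)"
    and mass: "\<mu> \<le> (\<Sum>s\<in>{..<2 ^ a} - {lo..<lo + 2 * h}. children_mass (response (cs @ ext)) j c s)"
    unfolding window_state_def by blast+
  define C where "C = window_cover j c lo (2 * h)"
  define ext' where "ext' = ext @ [C]"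
  define x where "x = response (cs @ ext')"
  have adm': "\<forall>C'\<in>set (cs @ ext'). admissible C'"
    using adm admissible_window_cover[OF j fit] \<open>0 < h\<close> by (auto simp: C_def ext'_def)
  have "1 \<le> (\<Sum>i<num_vars. fst C i * x i)"
    using response_feasible[OF adm'] unfolding x_def feasible_def by (auto simp: C_def window_cover_def ext'_def)
  then have "1 \<le> (\<Sum>s\<in>{lo..<lo + 2 * h}. children_mass x j c s)"
    unfolding C_def window_cover_value[OF j fit] .
  then obtain lo' where lo': "lo' = lo \<or> lo' = lo + h"
    and half: "1 / 2 \<le> (\<Sum>s\<in>{lo..<lo + 2 * h} - {lo'..<lo' + h}. children_mass x j c s)"
    by (rule exists_light_half)
  have "\<mu> \<le> (\<Sum>s\<in>{..<2 ^ a} - {lo..<lo + 2 * h}. children_mass x j c s)"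
  proof (rule order_trans[OF mass sum_mono])
    fix s assume "s \<in> {..<2 ^ a} - {lo..<lo + 2 * h}"
    then show "children_mass (response (cs @ ext)) j c s \<le> children_mass x j c s"
      using children_mass_mono[of "cs @ ext" "[C]"] adm' j unfolding x_def ext'_def by simp
  qed
  moreover have "(\<Sum>s\<in>{..<2 ^ a} - {lo'..<lo' + h}. children_mass x j c s) =
      (\<Sum>s\<in>{..<2 ^ a} - {lo..<lo + 2 * h}. children_mass x j c s) +
      (\<Sum>s\<in>{lo..<lo + 2 * h} - {lo'..<lo' + h}. children_mass x j c s)"
  proof -
    have "({..<2 ^ a} - {lo'..<lo' + h}) - ({lo..<lo + 2 * h} - {lo'..<lo' + h}) = {..<2 ^ a} - {lo..<lo + 2 * h}"
      using lo' fit by auto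
    moreover have "{lo..<lo + 2 * h} - {lo'..<lo' + h} \<subseteq> {..<2 ^ a} - {lo'..<lo' + h}"
      using fit by auto
    ultimately show ?thesis
      using sum.subset_diff[of "{lo..<lo + 2 * h} - {lo'..<lo' + h}" "{..<2 ^ a} - {lo'..<lo' + h}"]
      by simp
  qed
  ultimately have "\<mu> + 1 / 2 \<le> (\<Sum>s\<in>{..<2 ^ a} - {lo'..<lo' + h}. children_mass x j c s)"
    using half by linarith
  moreover have "\<forall>C'\<in>set ext'. snd C' = 1 \<and> (\<forall>b<2. \<forall>s\<in>{lo'..<lo' + h}. fst C' (var (Suc j) (2 * c + b) s) = 1)"
  proof -
    have "{lo'..<lo' + h} \<subseteq> {lo..<lo + 2 * h}" using lo' by auto
    moreover have "snd C = 1" by (simp add: C_def window_cover_def)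
    ultimately show ?thesis
      using covers window_cover_at[of _ _ lo "2 * h" j c] unfolding ext'_def C_def by auto
  qed
  moreover have "lo' + h \<le> 2 ^ a" using lo' fit by auto
  ultimately have "window_state j c cs ext' lo' h (\<mu> + 1 / 2)"
    using adm' unfolding window_state_def x_def by blast
  then show ?thesis by blast
qed

lemma window_state_exists:
  assumes j: "j < q" "c < 2 ^ j" and adm: "\<forall>C\<in>set cs. admissible C"
  shows "l \<le> a \<Longrightarrow> \<exists>ext lo. window_state j c cs ext lo (2 ^ (a - l)) (l / 2)"
proof (induction l)
  case 0
  have "window_state j c cs [] 0 (2 ^ a) 0" using adm by (simp add: window_state_def atLeast0LessThan)
  then show ?case by auto
next
  case (Suc l)
  have "a - l = Suc (a - Suc l)" using Suc.prems by simp
  then obtain ext lo where "window_state j c cs ext lo (2 * 2 ^ (a - Suc l)) (l / 2)"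
    using Suc by auto
  then have "\<exists>ext' lo'. window_state j c cs ext' lo' (2 ^ (a - Suc l)) (l / 2 + 1 / 2)"
    by (intro window_state_halve[OF j]) auto
  moreover have "real (Suc l) / 2 = l / 2 + 1 / 2" by (simp add: add_divide_distrib)
  ultimately show ?case by (simp only:)
qed

lemma halving_game:
  assumes j: "j < q" "c < 2 ^ j" and adm: "\<forall>C\<in>set cs. admissible C"
  obtains ext lo b where "\<forall>C\<in>set (cs @ ext). admissible C" "lo < 2 ^ a" "b < 2"
    "\<forall>C\<in>set ext. snd C = 1 \<and> (\<forall>b'<2. fst C (var (Suc j) (2 * c + b') lo) = 1)"
    "real a / 4 \<le> block_mass (response (cs @ ext)) (Suc j) (2 * c + b)"
proof -
  obtain ext lo where st: "window_state j c cs ext lo 1 (a / 2)"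
    using window_state_exists[OF j adm, of a] by auto
  let ?x = "response (cs @ ext)"
  from st have adm': "\<forall>C\<in>set (cs @ ext). admissible C" and "lo < 2 ^ a"
    and covers: "\<forall>C\<in>set ext. snd C = 1 \<and> (\<forall>b'<2. fst C (var (Suc j) (2 * c + b') lo) = 1)"
    and mass: "a / 2 \<le> (\<Sum>s\<in>{..<2 ^ a} - {lo..<lo + 1}. children_mass ?x j c s)"
    unfolding window_state_def by auto
  have "0 \<le> children_mass ?x j c s" if "s < 2 ^ a" for s
    using children_mass_nonneg[OF adm' j that] .
  then have "a / 2 \<le> (\<Sum>s<2 ^ a. children_mass ?x j c s)"
    by (intro order_trans[OF mass sum_mono2]) auto
  also have "\<dots> = block_mass ?x (Suc j) (2 * c) + block_mass ?x (Suc j) (2 * c + 1)"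
    by (simp add: children_mass_def block_mass_def sum.distrib)
  finally have total: "a / 2 \<le> block_mass ?x (Suc j) (2 * c) + block_mass ?x (Suc j) (2 * c + 1)" .
  obtain b where "b < 2" "real a / 4 \<le> block_mass ?x (Suc j) (2 * c + b)"
  proof (cases "real a / 4 \<le> block_mass ?x (Suc j) (2 * c)")
    case False
    then show ?thesis using that[of 1] total by linarith
  qed (use that[of 0] in simp)
  then show ?thesis using that adm' \<open>lo < 2 ^ a\<close> covers by blast
qed

text \<open>The adversary has walked down to node c at depth j.\<close>

definition adversary_state :: "nat \<Rightarrow> cover list \<Rightarrow> nat \<Rightarrow> (nat \<Rightarrow> real) \<Rightarrow> bool" where
  "adversary_state j cs c x \<longleftrightarrow>
     (\<forall>C\<in>set cs. admissible C) \<and> padding \<in> set cs \<and> c < 2 ^ j \<and> feasible num_vars cs x \<and>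
     (\<forall>k<2 ^ q. (\<Sum>i\<in>leaf_vars k. x i) \<le> of_bool (ancestor q k j \<noteq> c)) \<and>
     (\<forall>i\<in>{1..j}. real a / 4 \<le> block_mass (response cs) i (ancestor j c i))"

lemma adversary_state_root: "adversary_state 0 [padding] 0 ((\<lambda>_. 0)(tree_size := 1))"
proof -
  have "feasible num_vars ([] @ [padding]) ((\<lambda>_. 0)(tree_size := 0 + 1))"
  proof (rule feasible_append_fun_upd)
    have "1 \<le> 2 * q * 2 ^ a" using depth_pos by simp
    then have "1 \<le> d" using slots_le by linarith
    then show "tree_size < num_vars" by (simp add: num_vars_def)
  qed (use admissible_padding in \<open>auto simp: feasible_def admissible_def padding_def num_vars_def\<close>)
  moreover have "(\<Sum>i\<in>leaf_vars k. ((\<lambda>_. 0::real)(tree_size := 1)) i) = 0" for k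
    using leaf_vars_subset[of k] by (intro sum.neutral) auto
  ultimately show ?thesis using admissible_padding by (simp add: adversary_state_def)
qed

lemma leaf_load_descend:
  fixes x :: "nat \<Rightarrow> real"
  assumes j: "j < q" "c < 2 ^ j" "b < 2" and "lo < 2 ^ a" "k < 2 ^ q"
    and load: "(\<Sum>i\<in>leaf_vars k. x i) \<le> of_bool (ancestor q k j \<noteq> c)"
  defines "i0 \<equiv> var (Suc j) (2 * c + (1 - b)) lo"
  shows "(\<Sum>i\<in>leaf_vars k. (x(i0 := x i0 + 1)) i) \<le> of_bool (ancestor q k (Suc j) \<noteq> 2 * c + b)"
proof -
  let ?k' = "ancestor q k (Suc j)"
  have parent: "ancestor q k j = ?k' div 2"
    using ancestor_ancestor[of j "Suc j" q k] j by (simp add: ancestor_def)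
  have "i0 \<in> leaf_vars k \<longleftrightarrow> ?k' = 2 * c + (1 - b)"
    unfolding i0_def using assms child_less(2)[OF j(1,2), of "1 - b"] by (intro var_mem_leaf_vars_iff) auto
  then have new: "(\<Sum>i\<in>leaf_vars k. (x(i0 := x i0 + 1)) i) = (\<Sum>i\<in>leaf_vars k. x i) + of_bool (?k' = 2 * c + (1 - b))"
    using sum_fun_upd_add[of "leaf_vars k" x i0 1] finite_subset[OF leaf_vars_subset] by simp
  have children: "(2 * c + b) div 2 = c" "(2 * c + (1 - b)) div 2 = c" "2 * c + (1 - b) \<noteq> 2 * c + b"
    using j(3) by auto presburger
  consider "?k' = 2 * c + b" | "?k' = 2 * c + (1 - b)" | "?k' \<noteq> 2 * c + b" "?k' \<noteq> 2 * c + (1 - b)"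
    by blast
  then show ?thesis
  proof cases
    case 1
    then show ?thesis using new load parent children by simp
  next
    case 2
    then show ?thesis using new load parent children by simp
  next
    case 3
    have "(\<Sum>i\<in>leaf_vars k. x i) \<le> 1" using load by (rule order_trans) simp
    then show ?thesis using new 3 by simp
  qed
qed

lemma block_mass_descend:
  assumes adm: "\<forall>C\<in>set (cs @ ext). admissible C" and j: "j < q" "c < 2 ^ j" "b < 2" and "i \<le> j"
    and mass: "real a / 4 \<le> block_mass (response cs) i (ancestor j c i)"
  shows "real a / 4 \<le> block_mass (response (cs @ ext)) i (ancestor (Suc j) (2 * c + b) i)"
proof -
  have "ancestor (Suc j) (2 * c + b) i = ancestor j c i"
    using ancestor_ancestor[of i j "Suc j" "2 * c + b"] ancestor_child[OF j(3)] \<open>i \<le> j\<close> by simp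
  moreover have "ancestor j c i < 2 ^ q"
  proof -
    have "(2::nat) ^ j \<le> 2 ^ q" using j by (intro power_increasing) auto
    then show ?thesis using le_less_trans[OF ancestor_le j(2), of j i] by linarith
  qed
  then have "block_mass (response cs) i (ancestor j c i) \<le> block_mass (response (cs @ ext)) i (ancestor j c i)"
    using \<open>i \<le> j\<close> j by (intro block_mass_mono[OF adm]) auto
  ultimately show ?thesis using mass by simp
qed

lemma adversary_state_descend:
  assumes j: "j < q" and st: "adversary_state j cs c x"
  shows "\<exists>cs' c' x'. adversary_state (Suc j) cs' c' x'"
proof -
  from st have adm: "\<forall>C\<in>set cs. admissible C" and "padding \<in> set cs" and c: "c < 2 ^ j"
    and feas: "feasible num_vars cs x"
    and loads: "\<forall>k<2 ^ q. (\<Sum>i\<in>leaf_vars k. x i) \<le> of_bool (ancestor q k j \<noteq> c)"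
    and masses: "\<forall>i\<in>{1..j}. real a / 4 \<le> block_mass (response cs) i (ancestor j c i)"
    unfolding adversary_state_def by blast+
  obtain ext lo b where adm': "\<forall>C\<in>set (cs @ ext). admissible C" and "lo < 2 ^ a" "b < 2"
    and covers: "\<forall>C\<in>set ext. snd C = 1 \<and> (\<forall>b'<2. fst C (var (Suc j) (2 * c + b') lo) = 1)"
    and heavy: "real a / 4 \<le> block_mass (response (cs @ ext)) (Suc j) (2 * c + b)"
    using halving_game[OF j c adm] by blast
  \<comment> \<open>Offline, one unit on the sibling's slot at the final window satisfies every new constraint.\<close>
  define i0 where "i0 = var (Suc j) (2 * c + (1 - b)) lo"
  define x' where "x' = x(i0 := x i0 + 1)"
  have "feasible num_vars (cs @ ext) x'"
    unfolding x'_def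
  proof (rule feasible_append_fun_upd[OF feas])
    show "i0 < num_vars" unfolding i0_def using j c \<open>lo < 2 ^ a\<close> by (intro child_var_less_num_vars) auto
    show "\<forall>(C, c)\<in>set (cs @ ext). zero_one_row num_vars C"
      using adm' unfolding admissible_def by fastforce
    show "\<forall>(C, c)\<in>set ext. C i0 = 1 \<and> c \<le> 1"
    proof (intro ballI, clarify)
      fix C c assume "(C, c) \<in> set ext"
      then show "C i0 = 1 \<and> c \<le> 1" using covers unfolding i0_def by force
    qed
  qed
  moreover have "\<forall>k<2 ^ q. (\<Sum>i\<in>leaf_vars k. x' i) \<le> of_bool (ancestor q k (Suc j) \<noteq> 2 * c + b)"
    using leaf_load_descend[OF j c \<open>b < 2\<close> \<open>lo < 2 ^ a\<close>] loads unfolding x'_def i0_def by blast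
  moreover have "real a / 4 \<le> block_mass (response (cs @ ext)) i (ancestor (Suc j) (2 * c + b) i)"
    if "i \<in> {1..Suc j}" for i
  proof (cases "i = Suc j")
    case False
    with that masses show ?thesis by (intro block_mass_descend[OF adm' j c \<open>b < 2\<close>]) auto
  qed (use heavy ancestor_self in simp)
  moreover have "2 * c + b < 2 ^ Suc j" using child_less(1)[OF j c \<open>b < 2\<close>] .
  ultimately have "adversary_state (Suc j) (cs @ ext) (2 * c + b) x'"
    using adm' \<open>padding \<in> set cs\<close> unfolding adversary_state_def by auto
  then show ?thesis by blast
qed

lemma adversary_state_exists: "j \<le> q \<Longrightarrow> \<exists>cs c x. adversary_state j cs c x"
proof (induction j)
  case 0
  then show ?case using adversary_state_root by blast
next
  case (Suc j)
  then show ?case using adversary_state_descend by (metis Suc_leD Suc_le_lessD)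
qed

lemma response_objective_ge:
  assumes "adversary_state q cs c x" "0 < p"
  shows "real q * real a / 4 \<le> lp_objective r p num_vars packing (\<lambda>_. 1) (response cs)"
proof -
  from assms(1) have adm: "\<forall>C\<in>set cs. admissible C" and c: "c < 2 ^ q"
    and masses: "\<forall>i\<in>{1..q}. real a / 4 \<le> block_mass (response cs) i (ancestor q c i)"
    unfolding adversary_state_def by auto
  have "real q * (real a / 4) = (\<Sum>i=1..q. real a / 4)" by simp
  also have "\<dots> \<le> (\<Sum>i=1..q. block_mass (response cs) i (ancestor q c i))"
    using masses by (intro sum_mono) auto
  also have "\<dots> = violation num_vars packing (\<lambda>_. 1) (response cs) c"
    by (simp add: violation_packing sum_leaf_vars[OF c])
  also have "\<dots> \<le> lp_objective r p num_vars packing (\<lambda>_. 1) (response cs)"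
  proof (rule violation_le_lp_objective[OF \<open>0 < p\<close>])
    show "c < r" using c leaves_le by linarith
    have "0 \<le> response cs i" if "i \<in> leaf_vars c" for i
      using response_feasible[OF adm] mem_leaf_vars_less_num_vars[OF that] unfolding feasible_def by blast
    then show "0 \<le> violation num_vars packing (\<lambda>_. 1) (response cs) c"
      unfolding violation_packing by (rule sum_nonneg)
  qed
  finally show ?thesis by simp
qed

lemma offline_objective_le:
  assumes "adversary_state q cs c x" "real q \<le> p"
  shows "lp_objective r p num_vars packing (\<lambda>_. 1) x \<le> 2"
proof -
  from assms(1) have feas: "feasible num_vars cs x"
    and loads: "\<forall>k<2 ^ q. (\<Sum>i\<in>leaf_vars k. x i) \<le> of_bool (ancestor q k q \<noteq> c)"
    unfolding adversary_state_def by auto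
  have "0 < p" using assms(2) depth_pos by linarith
  have nonneg: "0 \<le> (\<Sum>i\<in>leaf_vars k. x i)" for k
  proof (rule sum_nonneg)
    show "0 \<le> x i" if "i \<in> leaf_vars k" for i
      using feas mem_leaf_vars_less_num_vars[OF that] unfolding feasible_def by blast
  qed
  have "lp_objective r p num_vars packing (\<lambda>_. 1) x \<le> real (2 ^ q) powr (1 / p)"
  proof (rule lp_objective_le_powr[OF \<open>0 < p\<close>], unfold violation_packing)
    fix k
    show "0 \<le> (\<Sum>i\<in>leaf_vars k. x i) \<and> (\<Sum>i\<in>leaf_vars k. x i) \<le> 1"
    proof (cases "k < 2 ^ q")
      case True
      then have "(\<Sum>i\<in>leaf_vars k. x i) \<le> of_bool (ancestor q k q \<noteq> c)" using loads by blast
      also have "\<dots> \<le> 1" by simp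
      finally show ?thesis using nonneg by blast
    qed (simp add: leaf_vars_def)
    show "2 ^ q \<le> k \<Longrightarrow> (\<Sum>i\<in>leaf_vars k. x i) = 0" by (simp add: leaf_vars_def)
  qed
  also have "real (2 ^ q) = 2 powr q" by (simp add: powr_realpow)
  also have "(2 powr q) powr (1 / p) = 2 powr (q / p)" by (simp add: powr_powr)
  also have "\<dots> \<le> 2 powr 1" using assms(2) \<open>0 < p\<close> by (intro powr_mono) auto
  finally show ?thesis by simp
qed

lemma competitive_ratio_bound:
  assumes "competitive r d p alg \<rho>" "real q \<le> p"
  shows "real q * real a / 8 \<le> \<rho>"
proof -
  obtain cs c x where st: "adversary_state q cs c x" using adversary_state_exists by blast
  then have adm: "\<forall>C\<in>set cs. admissible C" and "padding \<in> set cs" and feas: "feasible num_vars cs x"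
    unfolding adversary_state_def by auto
  have "0 < p" using assms(2) depth_pos by linarith
  have "max_sparsity_eq r d num_vars packing cs"
    unfolding max_sparsity_eq_def using \<open>padding \<in> set cs\<close> support_size_padding
    by (intro disjI2 bexI[of _ padding]) (auto simp: case_prod_beta)
  moreover have "wf_instance r d num_vars packing (\<lambda>_. 1) cs" using adm by (simp add: wf_instance_iff)
  moreover have "0 < real q * real a / 4" using depth_pos slots_pos by simp
  ultimately have "real q * real a / 4 \<le> \<rho> * 2"
    using competitive_ratio_ge[OF assms(1) _ _ feas _ response_objective_ge[OF st \<open>0 < p\<close>, unfolded response_def]
        offline_objective_le[OF st assms(2)]] by blast
  then show ?thesis by simp
qed

end

theorem theorem3:
  shows "\<exists>c>0. \<exists>N::real. \<forall>(r::nat) (d::nat) (p::real).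
           N \<le> real r \<and> N * log 2 (real r) \<le> real d \<and> 1 \<le> p \<and> p \<le> log 2 (real r) \<longrightarrow>
           (\<forall>alg \<rho>. valid_online_alg r d alg \<and> competitive r d p alg \<rho> \<longrightarrow>
              c * p * ln (real d / log 2 (real r)) \<le> \<rho>)"
proof -
  have "1 / 32 * p * ln (real d / log 2 (real r)) \<le> \<rho>"
    if r: "16 \<le> real r" and d: "16 * log 2 (real r) \<le> real d" and p: "1 \<le> p" "p \<le> log 2 (real r)"
      and alg: "valid_online_alg r d alg" "competitive r d p alg \<rho>"
    for r d :: nat and p \<rho> :: real and alg
  proof -
    obtain q a where "1 \<le> q" "2 ^ q \<le> r" "real q \<le> p" "1 \<le> a" "2 * q * 2 ^ a \<le> d"
      and ln_bound: "p * ln (d / log 2 r) \<le> 4 * real q * real a"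
      using hard_instance_parameters[OF r d p] .
    then interpret hard_instance alg r d q a
      using alg(1) by unfold_locales
    have "real q * real a / 8 \<le> \<rho>"
      using competitive_ratio_bound[OF alg(2) \<open>real q \<le> p\<close>] .
    then show ?thesis using ln_bound by simp
  qed
  then show ?thesis by (intro exI[of _ "1 / 32"] conjI exI[of _ 16]) auto
qed

end
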